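(* In the setting of the context, $b(\mathrm{Im}\,d_1^* )\subseteq J^k_o(X)$ and $b(\mathrm{Im}\,d_1^* )\subseteq\ker\Omega$, where $d_1^*:J^{k-2}(D;\mathbb{R}/\mathbb{Z})\to J^{k-1}(X;\mathbb{R}/\mathbb{Z})$ is the Mayer–Vietoris connecting map.
   Context: Let $J^*$ be a $\mathbb{Z}$-graded generalized cohomology theory on smooth manifolds (with corners) such that $J^k(\mathrm{pt})$ is finitely generated for every $k$; write $J^k(M;\mathbb{Z})=J^k(M)$, and $J^k(M;\mathbb{R}/\mathbb{Z})$ for the theory with $\mathbb{R}/\mathbb{Z}$ coefficients. For $F=\mathbb{Q},\mathbb{R}$ set $\mathbf H^k(M;F)=\bigoplus_{j\ge0}H^j(M;J^{k-j}(\mathrm{pt})\otimes F)$, and $\mathbf\Lambda^k(M)=\bigoplus_{j\ge0}\Omega^j(M;J^{k-j}(\mathrm{pt})\otimes\mathbb{R})$ (smooth forms), exterior derivative $d$. $ch:J^k(M;\mathbb{Z})\to\mathbf H^k(M;\mathbb{Q})$ is the canonical (Chern character) map, $i_\mathbb{R}$ the coefficient map, and $\mathbf\Lambda^k_J(M)$ the closed forms whose de Rham class lies in $i_\mathbb{R}(ch(J^k(M;\mathbb{Z})))$. $p:\mathbf H^{k-1}(M;\mathbb{R})\to J^{k-1}(M;\mathbb{R}/\mathbb{Z})$ is induced by $\mathbb{R}\to\mathbb{R}/\mathbb{Z}$ and $b:J^{k-1}(M;\mathbb{R}/\mathbb{Z})\to J^k(M;\mathbb{Z})$ is the Bockstein.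 $\hat J^k$ is a differential cohomology functor associated to $J$: a functor from smooth manifolds with corners to abelian groups with natural transformations $i_1:J^{k-1}(\cdot;\mathbb{R}/\mathbb{Z})\to\hat J^k$, $i_2:\mathbf\Lambda^{k-1}/\mathbf\Lambda^{k-1}_J\to\hat J^k$, $\delta_1:\hat J^k\to\mathbf\Lambda^k_J$, $\delta_2:\hat J^k\to J^k(\cdot;\mathbb{Z})$ with $0\to J^{k-1}(\mathbb{R}/\mathbb{Z})\xrightarrow{i_1}\hat J^k\xrightarrow{\delta_1}\mathbf\Lambda^k_J\to0$ and $0\to\mathbf\Lambda^{k-1}/\mathbf\Lambda^{k-1}_J\xrightarrow{i_2}\hat J^k\xrightarrow{\delta_2}J^k(\mathbb{Z})\to0$ exact, $\delta_2 i_1=b$, $\delta_1 i_2=d$, $i_1\circ p=i_2\circ\mathrm{deRh}$, and $\mathrm{deRh}\circ\delta_1=i_\mathbb{R}\circ ch\circ\delta_2$. Geometric setting: $X$ compact smooth manifold, $X=A\cup B$, $A,B$ compact codimension-$0$ submanifolds, $D=A\cap B$ codimension-$0$ with collar neighborhoods in $A$ and $B$; the Mayer–Vietoris sequences of $J(\cdot;\mathbb{R}/\mathbb{Z})$ and $J(\cdot;\mathbb{Z})$ for this decomposition are exact and commute up to sign with $b$. $J^k_o(X)=\{v\in J^k(X;\mathbb{Z}): v|_A=0=v|_B\}$. Definition of $\Omega$: for $v\in J^k_o(X)$ choose $h\in\hat J^k(X)$ with $\delta_2(h)=v$; then $h|_A=i_2(\{\gamma_A\})$, $h|_B=i_2(\{\gamma_B\})$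 for forms $\gamma_A,\gamma_B$ (braces denote classes mod $\mathbf\Lambda^{k-1}_J$), with $\gamma_A|_D-\gamma_B|_D\in\mathbf\Lambda^{k-1}_J(D)$; $\Omega(v)$ is its class in $\mathbf\Lambda^{k-1}_J(D)/(\mathbf\Lambda^{k-1}_J(A)|_D+\mathbf\Lambda^{k-1}_J(B)|_D)$ (independent of choices; $\Omega$ is a homomorphism). *)

theory Defs
  imports Main
begin

text \<open>
Abstract (diagrammatic) rendering of the differential-cohomology setting for the
decomposition X = A \<union> B, D = A \<inter> B.  Carriers (all abelian groups):
  'rx, 'ra, 'rb : J^(k-1)(X;R/Z), J^(k-1)(A;R/Z), J^(k-1)(B;R/Z)
  'rd           : J^(k-2)(D;R/Z)
  'zx, 'za, 'zb : J^k(X;Z), J^k(A;Z), J^k(B;Z)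
  'hx, 'ha, 'hb : hat J^k(X), hat J^k(A), hat J^k(B)
  'fx, 'fa, 'fb, 'fd : Lambda^(k-1)(X), Lambda^(k-1)(A), Lambda^(k-1)(B), Lambda^(k-1)(D)
The quotient Lambda^(k-1)/Lambda^(k-1)_J is encoded by letting i2 be defined on
forms with kernel exactly Lambda^(k-1)_J.
\<close>

definition additive :: "('a::ab_group_add \<Rightarrow> 'b::ab_group_add) \<Rightarrow> bool" where
  "additive f \<longleftrightarrow> (\<forall>x y. f (x + y) = f x + f y)"

locale mv_diff_setting =
  fixes rRA :: "'rx::ab_group_add \<Rightarrow> 'ra::ab_group_add"
    and rRB :: "'rx \<Rightarrow> 'rb::ab_group_add"
    and d1 :: "'rd::ab_group_add \<Rightarrow> 'rx"
    and rZA :: "'zx::ab_group_add \<Rightarrow> 'za::ab_group_add"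
    and rZB :: "'zx \<Rightarrow> 'zb::ab_group_add"
    and bX :: "'rx \<Rightarrow> 'zx" and bA :: "'ra \<Rightarrow> 'za" and bB :: "'rb \<Rightarrow> 'zb"
    and rHA :: "'hx::ab_group_add \<Rightarrow> 'ha::ab_group_add"
    and rHB :: "'hx \<Rightarrow> 'hb::ab_group_add"
    and i1X :: "'rx \<Rightarrow> 'hx" and i1A :: "'ra \<Rightarrow> 'ha" and i1B :: "'rb \<Rightarrow> 'hb"
    and d2X :: "'hx \<Rightarrow> 'zx" and d2A :: "'ha \<Rightarrow> 'za" and d2B :: "'hb \<Rightarrow> 'zb"
    and i2X :: "'fx::ab_group_add \<Rightarrow> 'hx" and i2A :: "'fa::ab_group_add \<Rightarrow> 'ha"
    and i2B :: "'fb::ab_group_add \<Rightarrow> 'hb"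
    and rFA :: "'fx \<Rightarrow> 'fa" and rFB :: "'fx \<Rightarrow> 'fb"
    and rAD :: "'fa \<Rightarrow> 'fd::ab_group_add" and rBD :: "'fb \<Rightarrow> 'fd"
    and LJX :: "'fx set" and LJA :: "'fa set" and LJB :: "'fb set"
  assumes add: "additive rRA" "additive rRB" "additive d1" "additive rZA" "additive rZB"
      "additive bX" "additive bA" "additive bB" "additive rHA" "additive rHB"
      "additive i1X" "additive i1A" "additive i1B" "additive d2X" "additive d2A" "additive d2B"
      "additive i2X" "additive i2A" "additive i2B" "additive rFA" "additive rFB"
      "additive rAD" "additive rBD"
    and mv_exact: "\<And>x. (rRA x = 0 \<and> rRB x = 0) \<longleftrightarrow> x \<in> range d1"
    and b_nat_A: "\<And>x. rZA (bX x) = bA (rRA x)"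
    and b_nat_B: "\<And>x. rZB (bX x) = bB (rRB x)"
    and i1_nat_A: "\<And>x. rHA (i1X x) = i1A (rRA x)"
    and i1_nat_B: "\<And>x. rHB (i1X x) = i1B (rRB x)"
    and i2_nat_A: "\<And>f. rHA (i2X f) = i2A (rFA f)"
    and i2_nat_B: "\<And>f. rHB (i2X f) = i2B (rFB f)"
    and d2_nat_A: "\<And>h. rZA (d2X h) = d2A (rHA h)"
    and d2_nat_B: "\<And>h. rZB (d2X h) = d2B (rHB h)"
    and d2i1_X: "\<And>x. d2X (i1X x) = bX x"
    and d2i1_A: "\<And>x. d2A (i1A x) = bA x"
    and d2i1_B: "\<And>x. d2B (i1B x) = bB x"
    \<comment> \<open>exactness of 0 \<rightarrow> Lambda/Lambda_J \<rightarrow> hat J \<rightarrow> J(Z) \<rightarrow> 0 on X, A, B\<close>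
    and i2_ker_X: "\<And>f. i2X f = 0 \<longleftrightarrow> f \<in> LJX"
    and i2_ker_A: "\<And>f. i2A f = 0 \<longleftrightarrow> f \<in> LJA"
    and i2_ker_B: "\<And>f. i2B f = 0 \<longleftrightarrow> f \<in> LJB"
    and d2_ker_X: "\<And>h. d2X h = 0 \<longleftrightarrow> h \<in> range i2X"
    and d2_ker_A: "\<And>h. d2A h = 0 \<longleftrightarrow> h \<in> range i2A"
    and d2_ker_B: "\<And>h. d2B h = 0 \<longleftrightarrow> h \<in> range i2B"
    and d2_surj_X: "surj d2X" and d2_surj_A: "surj d2A" and d2_surj_B: "surj d2B"
    \<comment> \<open>functoriality of restriction of forms: (f|_A)|_D = f|_D = (f|_B)|_D\<close>
    and forms_comm: "\<And>f. rAD (rFA f) = rBD (rFB f)"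

definition J_o :: "('zx \<Rightarrow> 'za::zero) \<Rightarrow> ('zx \<Rightarrow> 'zb::zero) \<Rightarrow> 'zx set" where
  "J_o rZA rZB = {v. rZA v = 0 \<and> rZB v = 0}"

text \<open>w is a representative form of Omega(v): gamma_A|_D - gamma_B|_D for some choice of
  h with delta2 h = v and h|_A = i2(gamma_A), h|_B = i2(gamma_B).\<close>
definition Omega_rep ::
  "('hx \<Rightarrow> 'zx) \<Rightarrow> ('hx \<Rightarrow> 'ha) \<Rightarrow> ('hx \<Rightarrow> 'hb) \<Rightarrow> ('fa \<Rightarrow> 'ha) \<Rightarrow> ('fb \<Rightarrow> 'hb)
   \<Rightarrow> ('fa \<Rightarrow> 'fd::ab_group_add) \<Rightarrow> ('fb \<Rightarrow> 'fd) \<Rightarrow> 'zx \<Rightarrow> 'fd \<Rightarrow> bool" where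
  "Omega_rep d2X rHA rHB i2A i2B rAD rBD v w \<longleftrightarrow>
     (\<exists>h gA gB. d2X h = v \<and> rHA h = i2A gA \<and> rHB h = i2B gB \<and> w = rAD gA - rBD gB)"

definition restr_sum :: "('fa \<Rightarrow> 'fd::plus) \<Rightarrow> ('fb \<Rightarrow> 'fd) \<Rightarrow> 'fa set \<Rightarrow> 'fb set \<Rightarrow> 'fd set" where
  "restr_sum rAD rBD LJA LJB = {rAD a + rBD b | a b. a \<in> LJA \<and> b \<in> LJB}"

text \<open>ker Omega: v \<in> J_o(X), Omega(v) has a representative, and every representative lies in
  Lambda_J(A)|_D + Lambda_J(B)|_D (i.e. the class Omega(v) is zero).\<close>
definition Omega_ker ::
  "('zx \<Rightarrow> 'za::zero) \<Rightarrow> ('zx \<Rightarrow> 'zb::zero) \<Rightarrow> ('hx \<Rightarrow> 'zx) \<Rightarrow> ('hx \<Rightarrow> 'ha) \<Rightarrow> ('hx \<Rightarrow> 'hb)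
   \<Rightarrow> ('fa \<Rightarrow> 'ha) \<Rightarrow> ('fb \<Rightarrow> 'hb) \<Rightarrow> ('fa \<Rightarrow> 'fd::ab_group_add) \<Rightarrow> ('fb \<Rightarrow> 'fd)
   \<Rightarrow> 'fa set \<Rightarrow> 'fb set \<Rightarrow> 'zx set" where
  "Omega_ker rZA rZB d2X rHA rHB i2A i2B rAD rBD LJA LJB =
     {v \<in> J_o rZA rZB. (\<exists>w. Omega_rep d2X rHA rHB i2A i2B rAD rBD v w) \<and>
        (\<forall>w. Omega_rep d2X rHA rHB i2A i2B rAD rBD v w \<longrightarrow> w \<in> restr_sum rAD rBD LJA LJB)}"

end

theory Submission
  imports Defs
begin

text \<open>
  Let x = d_1^*(y) lie in the image of the Mayer--Vietoris connecting map.
  By exactness x restricts to zero on A and on B, so by naturality of the Bockstein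
  b(x)|_A = b(x|_A) = 0 and likewise on B: thus b(x) \<in> J^k_o(X).
  For the kernel of Omega we lift b(x) to the differential class i_1(x), using
  delta_2 i_1 = b.  By naturality of i_1 this lift restricts to zero on A and on B, so
  gamma_A = gamma_B = 0 is an admissible choice and yields the representative 0 of
  Omega(b(x)).  Since Omega is well defined -- any two representatives of Omega(v) differ
  by an element of Lambda_J(A)|_D + Lambda_J(B)|_D, which is proved below from the exact
  sequence for delta_2, the kernel of i_2 and compatibility of restrictions -- every
  representative of Omega(b(x)) lies in that subgroup, i.e. Omega(b(x)) = 0.
  The file first records elementary facts on additive maps, then proves the
  well-definedness of Omega and the two properties of b(x) inside the locale, and
  finally assembles the theorem.
\<close>

lemma additive_zero: "additive f \<Longrightarrow> f 0 = 0"
  unfolding additive_def by (metis add_cancel_right_right add_0)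

lemma additive_diff: "additive f \<Longrightarrow> f (x - y) = f x - f y"
  unfolding additive_def by (metis add_diff_cancel eq_diff_eq)

lemma additive_neg: "additive f \<Longrightarrow> f (- x) = - f x"
  using additive_diff[of f 0 x] additive_zero[of f] by simp

context mv_diff_setting
begin

lemma LJB_neg: "b \<in> LJB \<Longrightarrow> - b \<in> LJB"
  by (simp add: i2_ker_B[symmetric] additive_neg[OF add(19)])

lemma i2A_difference:
  assumes "i2A g - i2A g' = i2A (rFA f)"
  shows "g - g' - rFA f \<in> LJA"
  using assms by (simp add: i2_ker_A[symmetric] additive_diff[OF add(18)])

lemma i2B_difference:
  assumes "i2B g - i2B g' = i2B (rFB f)"
  shows "g - g' - rFB f \<in> LJB"
  using assms by (simp add: i2_ker_B[symmetric] additive_diff[OF add(19)])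

text \<open>Two lifts of v differ by i_2 of a global form f,
  and f|_A|_D = f|_B|_D cancels in the difference.\<close>

lemma Omega_rep_unique_mod:
  assumes "Omega_rep d2X rHA rHB i2A i2B rAD rBD v w"
    and "Omega_rep d2X rHA rHB i2A i2B rAD rBD v w'"
  shows "w - w' \<in> restr_sum rAD rBD LJA LJB"
proof -
  obtain h gA gB where h: "d2X h = v" "rHA h = i2A gA" "rHB h = i2B gB"
    and w: "w = rAD gA - rBD gB"
    using assms(1) unfolding Omega_rep_def by blast
  obtain h' gA' gB' where h': "d2X h' = v" "rHA h' = i2A gA'" "rHB h' = i2B gB'"
    and w': "w' = rAD gA' - rBD gB'"
    using assms(2) unfolding Omega_rep_def by blast
  have "d2X (h - h') = 0"
    using h(1) h'(1) by (simp add: additive_diff[OF add(14)])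
  then obtain f where f: "h - h' = i2X f"
    using d2_ker_X by blast
  have "i2A gA - i2A gA' = i2A (rFA f)"
    using h(2) h'(2) by (metis f i2_nat_A additive_diff[OF add(9)])
  then have a: "gA - gA' - rFA f \<in> LJA"
    by (rule i2A_difference)
  have "i2B gB - i2B gB' = i2B (rFB f)"
    using h(3) h'(3) by (metis f i2_nat_B additive_diff[OF add(10)])
  then have b: "- (gB - gB' - rFB f) \<in> LJB"
    by (intro LJB_neg i2B_difference)
  have "w - w' = rAD (gA - gA' - rFA f) + rBD (- (gB - gB' - rFB f))"
    using w w' forms_comm[of f]
    by (simp add: additive_diff[OF add(22)] additive_diff[OF add(23)] additive_neg[OF add(23)])
  then show ?thesis
    unfolding restr_sum_def using a b by blast
qed

lemma Omega_ker_intro: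
  assumes "v \<in> J_o rZA rZB" and "Omega_rep d2X rHA rHB i2A i2B rAD rBD v 0"
  shows "v \<in> Omega_ker rZA rZB d2X rHA rHB i2A i2B rAD rBD LJA LJB"
  using assms Omega_rep_unique_mod[OF _ assms(2)]
  unfolding Omega_ker_def by fastforce

lemma d1_restrict_zero: "rRA (d1 y) = 0" "rRB (d1 y) = 0"
  using mv_exact by blast+

lemma bockstein_d1_in_J_o: "bX (d1 y) \<in> J_o rZA rZB"
  unfolding J_o_def
  by (simp add: b_nat_A b_nat_B d1_restrict_zero additive_zero add(7,8))

lemma i1_d1_restrict_zero: "rHA (i1X (d1 y)) = 0" "rHB (i1X (d1 y)) = 0"
  by (simp_all add: i1_nat_A i1_nat_B d1_restrict_zero additive_zero add(12,13))

lemma Omega_rep_bockstein_d1: "Omega_rep d2X rHA rHB i2A i2B rAD rBD (bX (d1 y)) 0"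
  unfolding Omega_rep_def
proof (intro exI conjI)
  show "d2X (i1X (d1 y)) = bX (d1 y)" by (rule d2i1_X)
  show "rHA (i1X (d1 y)) = i2A 0" "rHB (i1X (d1 y)) = i2B 0"
    by (simp_all add: i1_d1_restrict_zero additive_zero add(18,19))
  show "0 = rAD 0 - rBD 0"
    by (simp add: additive_zero add(22,23))
qed

lemma bockstein_d1_in_Omega_ker:
  "bX (d1 y) \<in> Omega_ker rZA rZB d2X rHA rHB i2A i2B rAD rBD LJA LJB"
  by (rule Omega_ker_intro[OF bockstein_d1_in_J_o Omega_rep_bockstein_d1])

end

theorem lemma4:
  assumes "mv_diff_setting rRA rRB d1 rZA rZB bX bA bB rHA rHB i1X i1A i1B d2X d2A d2B
             i2X i2A i2B rFA rFB rAD rBD LJX LJA LJB"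
  shows "bX ` range d1 \<subseteq> J_o rZA rZB \<and>
         bX ` range d1 \<subseteq> Omega_ker rZA rZB d2X rHA rHB i2A i2B rAD rBD LJA LJB"
proof -
  interpret mv_diff_setting rRA rRB d1 rZA rZB bX bA bB rHA rHB i1X i1A i1B d2X d2A d2B
      i2X i2A i2B rFA rFB rAD rBD LJX LJA LJB
    by (rule assms)
  show ?thesis
    using bockstein_d1_in_J_o bockstein_d1_in_Omega_ker by blast
qed

end
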